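(* Let $m,k\in\mathbb{N}$, let $\beta,\gamma,\mu\in\mathbb{C}$ with $\beta-k-1,\ \beta-\gamma-m-k\notin\mathbb{Z}_0^-$, $\Re(-m-k-\gamma)>0$ and $\Re(\mu)>0$. Then \[ \int_0^\infty t^{-m-k-\gamma-1}e^{-\mu t}\,{}_2F_2\left[\begin{array}{r} -m,\ \beta-k-1;\\ -m-k,\ \beta-\gamma-m-k;\end{array}\mu t\right]_m dt=\frac{\Gamma(-m-k-\gamma)}{\mu^{-m-k-\gamma}}\frac{\left(\beta\right)_m\left(\gamma\right)_m}{\left(1+k\right)_m\left(1+k+\gamma-\beta\right)_m}. \]
   Context: $\mathbb{N}=\{1,2,3,\dots\}$, $\mathbb{Z}_0^-=\{0,-1,-2,\dots\}$. For $a\in\mathbb{C}$ and $n\in\mathbb{N}_0$, $(a)_0=1$ and $(a)_n=a(a+1)\cdots(a+n-1)$. For $N\in\mathbb{N}_0$, the truncated series is ${}_2F_2\left[\begin{array}{r} a_1,a_2;\\ b_1,b_2;\end{array}z\right]_N=\sum_{n=0}^{N}\frac{(a_1)_n(a_2)_n}{(b_1)_n(b_2)_n}\frac{z^n}{n!}$ (first $N+1$ terms). The left side is the Mellin transform $\int_0^\infty t^{s-1}f(t)\,dt$ at $s=-m-k-\gamma$; $\mu^{s}$ denotes the principal power. *)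

theory Defs
  imports "HOL-Analysis.Analysis"
begin

definition hyp2F2_trunc :: "complex \<Rightarrow> complex \<Rightarrow> complex \<Rightarrow> complex \<Rightarrow> complex \<Rightarrow> nat \<Rightarrow> complex" where
  "hyp2F2_trunc a1 a2 b1 b2 z N =
     (\<Sum>n\<le>N. (pochhammer a1 n * pochhammer a2 n) / (pochhammer b1 n * pochhammer b2 n)
              * z ^ n / of_nat (fact n))"

end

theory Submission
  imports Defs
begin

text \<open>Expanding the truncated \<open>\<^sub>2F\<^sub>2\<close> and integrating term by term with
  \<open>\<integral>\<^sub>0\<^sup>\<infinity> t\<^sup>s\<^sup>+\<^sup>n\<^sup>-\<^sup>1 e\<^sup>-\<^sup>\<mu>\<^sup>t dt = \<Gamma>(s) (s)\<^sub>n / \<mu>\<^sup>s\<^sup>+\<^sup>n\<close>, where \<open>s = -m-k-\<gamma>\<close>, the powers of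
  \<open>\<mu>t\<close> cancel and the integral becomes \<open>\<Gamma>(s) / \<mu>\<^sup>s\<close> times the terminating balanced series
  \<open>\<^sub>3F\<^sub>2(-m, \<beta>-k-1, s; -m-k, \<beta>-\<gamma>-m-k; 1)\<close>, which the Pfaff-Saalschuetz theorem sums in
  closed form.

  Pfaff-Saalschuetz is proved by induction on the length \<open>m\<close>: a Wilf-Zeilberger certificate
  turns the recurrence in \<open>m\<close> into a telescoping sum over \<open>n\<close>. The Laplace transform of
  \<open>t\<^sup>z\<^sup>-\<^sup>1\<close> at complex \<open>\<mu>\<close> is reduced to real \<open>\<sigma>\<close> with \<open>|\<mu> - \<sigma>| < \<sigma>\<close> by expanding
  \<open>exp ((\<sigma> - \<mu>) t)\<close> into powers of \<open>t\<close>; the termwise integrals sum to a binomial series.\<close>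

section \<open>The Pfaff-Saalschuetz summation\<close>

lemma pochhammer_minus_eq:
  fixes y :: "'a :: field"
  assumes "y \<noteq> of_nat n"
  shows "pochhammer (- y) n = pochhammer (1 - y) n * (y / (y - of_nat n))"
proof -
  have "pochhammer (- y) n * (y - of_nat n) = y * pochhammer (1 - y) n"
    using pochhammer_Suc[of "- y" n] pochhammer_rec[of "- y" n] by (simp add: algebra_simps)
  with assms show ?thesis
    by (simp add: field_simps)
qed

lemma pochhammer_reflect: "pochhammer (1 - of_nat n - x) n = (- 1) ^ n * pochhammer (x :: 'a :: comm_ring_1) n"
  using pochhammer_minus[of "x + of_nat n - 1" n] by (simp add: algebra_simps)

definition saalschuetz_term :: "complex \<Rightarrow> complex \<Rightarrow> complex \<Rightarrow> nat \<Rightarrow> nat \<Rightarrow> complex" where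
  "saalschuetz_term a b c m n =
     pochhammer (- of_nat m) n * pochhammer a n * pochhammer b n /
     (pochhammer c n * pochhammer (1 + a + b - c - of_nat m) n * fact n)"

definition saalschuetz_certificate :: "complex \<Rightarrow> complex \<Rightarrow> complex \<Rightarrow> nat \<Rightarrow> nat \<Rightarrow> complex" where
  "saalschuetz_certificate a b c m n =
     (c - a - b + of_nat m) / of_nat (Suc m) * of_nat n * (c + of_nat n - 1)
       * saalschuetz_term a b c (Suc m) n"

lemma saalschuetz_term_eq_0: "m < n \<Longrightarrow> saalschuetz_term a b c m n = 0"
  by (simp add: saalschuetz_term_def pochhammer_of_nat_eq_0_lemma)

lemma saalschuetz_term_Suc:
  "saalschuetz_term a b c m (Suc n) = saalschuetz_term a b c m n *
     ((of_nat n - of_nat m) / (1 + a + b - c - of_nat m + of_nat n)) *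
     ((a + of_nat n) * (b + of_nat n) / ((c + of_nat n) * (of_nat n + 1)))"
  unfolding saalschuetz_term_def pochhammer_Suc fact_Suc by (simp add: ac_simps)

lemma saalschuetz_term_Suc_length:
  fixes a b c :: complex
  defines "e \<equiv> c - a - b"
  assumes "n \<le> m" "e + of_nat m \<noteq> 0" "e + of_nat m \<noteq> of_nat n"
  shows "saalschuetz_term a b c (Suc m) n = saalschuetz_term a b c m n *
     (of_nat (Suc m) * (e + of_nat m - of_nat n) / ((of_nat (Suc m) - of_nat n) * (e + of_nat m)))"
proof -
  have "of_nat (Suc m) \<noteq> (of_nat n :: complex)"
    using assms(2) by (metis le_imp_less_Suc less_irrefl of_nat_eq_iff)
  moreover have "1 - of_nat (Suc m) = (- of_nat m :: complex)"
    by simp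
  ultimately have num: "pochhammer (- of_nat (Suc m) :: complex) n
      = pochhammer (- of_nat m) n * (of_nat (Suc m) / (of_nat (Suc m) - of_nat n))"
    using pochhammer_minus_eq[of "of_nat (Suc m) :: complex" n] by simp
  have "- (e + of_nat m) = 1 + a + b - c - of_nat (Suc m)" "1 - (e + of_nat m) = 1 + a + b - c - of_nat m"
    by (simp_all add: e_def)
  from pochhammer_minus_eq[OF assms(4), unfolded this]
  have den: "pochhammer (1 + a + b - c - of_nat (Suc m)) n
      = pochhammer (1 + a + b - c - of_nat m) n * ((e + of_nat m) / (e + of_nat m - of_nat n))" .
  show ?thesis
    using assms(3,4) unfolding saalschuetz_term_def num den by (simp add: ac_simps)
qed

lemma saalschuetz_term_Suc_Suc:
  fixes a b c :: complex
  defines "e \<equiv> c - a - b"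
  assumes "n \<le> m" "e + of_nat m \<noteq> 0" "e + of_nat m \<noteq> of_nat n"
  shows "saalschuetz_term a b c (Suc m) (Suc n) = saalschuetz_term a b c m n *
     (of_nat (Suc m) / (e + of_nat m)) *
     ((a + of_nat n) * (b + of_nat n) / ((c + of_nat n) * (of_nat n + 1)))"
proof -
  have "of_nat (Suc m) - of_nat n \<noteq> (0 :: complex)" "e + of_nat m - of_nat n \<noteq> 0"
    using assms(2,4) by (metis le_imp_less_Suc less_irrefl of_nat_eq_iff right_minus_eq)+
  moreover have signs: "of_nat n - of_nat (Suc m) = - (of_nat (Suc m) - of_nat n :: complex)"
    "1 + a + b - c - of_nat (Suc m) + of_nat n = - (e + of_nat m - of_nat n)"
    by (simp_all add: e_def)
  ultimately have "(e + of_nat m - of_nat n) / ((of_nat (Suc m) - of_nat n))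
      * ((of_nat n - of_nat (Suc m)) / (1 + a + b - c - of_nat (Suc m) + of_nat n)) = 1"
    unfolding signs by simp (simp add: algebra_simps)
  then show ?thesis
    using saalschuetz_term_Suc[of a b c "Suc m" n] saalschuetz_term_Suc_length[OF assms(2-4)[unfolded e_def]]
    unfolding e_def by (simp add: ac_simps)
qed

lemma saalschuetz_telescoping_le:
  fixes a b c :: complex
  defines "e \<equiv> c - a - b"
  assumes "n \<le> m" and nz: "c + of_nat n \<noteq> 0" "e + of_nat m \<noteq> 0" "e + of_nat m \<noteq> of_nat n"
  shows "(c + of_nat m) * (e + of_nat m) * saalschuetz_term a b c (Suc m) n
         - (c - a + of_nat m) * (c - b + of_nat m) * saalschuetz_term a b c m n
       = saalschuetz_certificate a b c m n - saalschuetz_certificate a b c m (Suc n)"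
proof -
  define W where "W = saalschuetz_term a b c m n"
  define K :: complex where "K = of_nat m"
  define N :: complex where "N = of_nat n"
  define q where "q = (e + K - N) / (K + 1 - N)"
  have "K + 1 - N = of_nat (Suc m - n)"
    using \<open>n \<le> m\<close> by (simp add: K_def N_def of_nat_diff)
  with \<open>n \<le> m\<close> have "K + 1 - N \<noteq> 0"
    by (metis Suc_diff_le of_nat_neq_0)
  moreover have "N + 1 \<noteq> 0" "K + 1 \<noteq> 0"
    using of_nat_neq_0[of n, where ?'a = complex] of_nat_neq_0[of m, where ?'a = complex]
    by (simp_all add: K_def N_def add.commute)
  ultimately have nz': "K + 1 - N \<noteq> 0" "N + 1 \<noteq> 0" "K + 1 \<noteq> 0" "c + N \<noteq> 0" "e + K \<noteq> 0"
    using nz by (simp_all add: K_def N_def)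
  have sucs: "of_nat (Suc m) = K + 1" "of_nat (Suc n) = N + 1"
    by (simp_all add: K_def N_def)
  have F1: "saalschuetz_term a b c (Suc m) n = W * (K + 1) / (e + K) * q"
    using saalschuetz_term_Suc_length[OF \<open>n \<le> m\<close>, of c a b] nz
    unfolding W_def K_def N_def e_def q_def by (simp add: ac_simps)
  have F2: "saalschuetz_term a b c (Suc m) (Suc n) = W * (K + 1) / (e + K) * ((a + N) * (b + N) / ((c + N) * (N + 1)))"
    using saalschuetz_term_Suc_Suc[OF \<open>n \<le> m\<close>, of c a b] nz
    unfolding W_def K_def N_def e_def by (simp add: ac_simps)
  have "saalschuetz_certificate a b c m n = (e + K) / (K + 1) * N * (c + N - 1) * saalschuetz_term a b c (Suc m) n"
    "saalschuetz_certificate a b c m (Suc n) = (e + K) / (K + 1) * ((N + 1) * (c + N)) * saalschuetz_term a b c (Suc m) (Suc n)"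
    unfolding saalschuetz_certificate_def sucs e_def[symmetric] K_def[symmetric] N_def[symmetric]
    by (simp_all add: mult.assoc)
  then have G: "saalschuetz_certificate a b c m n = W * N * (c + N - 1) * q"
    "saalschuetz_certificate a b c m (Suc n) = W * (a + N) * (b + N)"
    using nz' unfolding F1 F2 by (simp_all add: divide_simps ac_simps)
  txt \<open>After division by \<open>W\<close> the identity reduces to these two factorizations.\<close>
  have "(c + K) * (K + 1) - N * (c + N - 1) = (K + 1 - N) * (c + K + N)"
    "(c - a + K) * (c - b + K) - (a + N) * (b + N) = (c + K + N) * (e + K - N)"
    by (simp_all add: e_def algebra_simps)
  then have "((c + K) * (K + 1) - N * (c + N - 1)) * q = (c - a + K) * (c - b + K) - (a + N) * (b + N)"
    using nz'(1) unfolding q_def by simp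
  then have "(c + K) * (K + 1) * q - (c - a + K) * (c - b + K) = N * (c + N - 1) * q - (a + N) * (b + N)"
    by (simp add: algebra_simps)
  then have "W * ((c + K) * (K + 1) * q - (c - a + K) * (c - b + K)) = W * (N * (c + N - 1) * q - (a + N) * (b + N))"
    by (rule arg_cong)
  moreover have "(c + K) * (e + K) * saalschuetz_term a b c (Suc m) n = W * ((c + K) * (K + 1) * q)"
    using nz'(5) unfolding F1 by simp
  ultimately show ?thesis
    unfolding G K_def[symmetric] W_def[symmetric] by (simp add: algebra_simps)
qed

lemma saalschuetz_telescoping:
  fixes a b c :: complex
  defines "e \<equiv> c - a - b"
  assumes c: "pochhammer c (Suc m) \<noteq> 0" and e: "pochhammer e (Suc m) \<noteq> 0" and "n \<le> Suc m"
  shows "(c + of_nat m) * (e + of_nat m) * saalschuetz_term a b c (Suc m) n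
         - (c - a + of_nat m) * (c - b + of_nat m) * saalschuetz_term a b c m n
       = saalschuetz_certificate a b c m n - saalschuetz_certificate a b c m (Suc n)"
proof (cases "n = Suc m")
  case True
  then show ?thesis
    by (simp add: saalschuetz_certificate_def saalschuetz_term_eq_0 e_def field_simps del: of_nat_Suc)
      (simp add: algebra_simps)
next
  case False
  with \<open>n \<le> Suc m\<close> have "n \<le> m"
    by simp
  have "e + of_nat m \<noteq> of_nat n"
  proof
    assume "e + of_nat m = of_nat n"
    with \<open>n \<le> m\<close> have "e = - of_nat (m - n)"
      by (simp add: of_nat_diff algebra_simps)
    with e show False
      by (auto simp: pochhammer_eq_0_iff)
  qed
  moreover have "c + of_nat n \<noteq> 0" "e + of_nat m \<noteq> 0"
    using c e \<open>n \<le> m\<close> by (auto simp: pochhammer_eq_0_iff add_eq_0_iff2)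
  ultimately show ?thesis
    using saalschuetz_telescoping_le[OF \<open>n \<le> m\<close>] by (simp add: e_def)
qed

theorem pfaff_saalschuetz:
  fixes a b c :: complex
  assumes "pochhammer c m \<noteq> 0" "pochhammer (c - a - b) m \<noteq> 0"
  shows "(\<Sum>n\<le>m. saalschuetz_term a b c m n) =
    pochhammer (c - a) m * pochhammer (c - b) m / (pochhammer c m * pochhammer (c - a - b) m)"
  using assms
proof (induction m)
  case 0
  show ?case
    by (simp add: saalschuetz_term_def)
next
  case (Suc m)
  define e where "e = c - a - b"
  have c: "pochhammer c (Suc m) \<noteq> 0" and e: "pochhammer e (Suc m) \<noteq> 0"
    using Suc.prems by (simp_all add: e_def)
  then have nz: "c + of_nat m \<noteq> 0" "e + of_nat m \<noteq> 0" "pochhammer c m \<noteq> 0" "pochhammer e m \<noteq> 0"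
    by (simp_all add: pochhammer_Suc)
  let ?G = "saalschuetz_certificate a b c m"
  have "(c + of_nat m) * (e + of_nat m) * (\<Sum>n<Suc (Suc m). saalschuetz_term a b c (Suc m) n)
      - (c - a + of_nat m) * (c - b + of_nat m) * (\<Sum>n<Suc (Suc m). saalschuetz_term a b c m n)
      = (\<Sum>n<Suc (Suc m). ?G n - ?G (Suc n))"
    using saalschuetz_telescoping[OF c e[unfolded e_def]]
    by (simp add: sum_distrib_left sum_subtractf[symmetric] e_def del: sum.lessThan_Suc)
  also have "\<dots> = 0"
    unfolding sum_lessThan_telescope' by (simp add: saalschuetz_certificate_def saalschuetz_term_eq_0)
  finally have "(c + of_nat m) * (e + of_nat m) * (\<Sum>n\<le>Suc m. saalschuetz_term a b c (Suc m) n)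
      = (c - a + of_nat m) * (c - b + of_nat m) * (\<Sum>n\<le>m. saalschuetz_term a b c m n)"
    by (simp add: lessThan_Suc_atMost saalschuetz_term_eq_0)
  with nz(1,2) have "(\<Sum>n\<le>Suc m. saalschuetz_term a b c (Suc m) n)
      = (c - a + of_nat m) * (c - b + of_nat m) * (\<Sum>n\<le>m. saalschuetz_term a b c m n)
        / ((c + of_nat m) * (e + of_nat m))"
    by (simp add: eq_divide_eq ac_simps)
  also have "\<dots> = pochhammer (c - a) (Suc m) * pochhammer (c - b) (Suc m)
      / (pochhammer c (Suc m) * pochhammer (c - a - b) (Suc m))"
    using Suc.IH nz(3,4) unfolding e_def pochhammer_Suc by (simp add: ac_simps)
  finally show ?case .
qed

section \<open>The Laplace transform of a power\<close>

lemma has_integral_Ioi_stretch: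
  fixes f :: "real \<Rightarrow> 'a::euclidean_space" and c :: real
  assumes f: "f absolutely_integrable_on {0<..}" and c: "c > 0"
  shows "((\<lambda>x. f (c * x)) has_integral integral {0<..} f /\<^sub>R c) {0<..}"
proof -
  let ?g = "\<lambda>x. indicator {0<..} x *\<^sub>R f x"
  have g: "integrable lebesgue ?g"
    using f unfolding set_integrable_def .
  have g_stretch: "?g (0 + c * x) = indicator {0<..} x *\<^sub>R f (c * x)" for x
    using c by (auto simp: indicator_def zero_less_mult_iff)
  have "integrable lebesgue (\<lambda>x. ?g (0 + c * x))"
    using lebesgue_integrable_real_affine[OF g, of c 0] c by simp
  then have fc: "set_integrable lebesgue {0<..} (\<lambda>x. f (c * x))"
    unfolding set_integrable_def g_stretch .
  have "(LINT x:{0<..}|lebesgue. f x) = c *\<^sub>R (LINT x:{0<..}|lebesgue. f (c * x))"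
    using lebesgue_integral_real_affine[of c ?g 0] c
    unfolding set_lebesgue_integral_def g_stretch by simp
  then have "(LINT x:{0<..}|lebesgue. f (c * x)) = integral {0<..} f /\<^sub>R c"
    using c set_lebesgue_integral_eq_integral(2)[OF f] by simp
  then show ?thesis
    using has_integral_set_lebesgue[OF fc] by simp
qed

lemma Gamma_integral_real_scaled:
  fixes z :: complex and \<sigma> :: real
  assumes z: "Re z > 0" and \<sigma>: "\<sigma> > 0"
  shows "((\<lambda>t. of_real t powr (z - 1) * exp (- of_real \<sigma> * of_real t)) has_integral
           Gamma z / of_real \<sigma> powr z) {0<..}"
proof -
  let ?f = "\<lambda>t. of_real t powr (z - 1) / of_real (exp t) :: complex"
  have "integral {0<..} ?f = Gamma z"
    using Gamma_integral_complex'[OF z] by (rule integral_unique)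
  then have "((\<lambda>t. ?f (\<sigma> * t)) has_integral Gamma z / of_real \<sigma>) {0<..}"
    using has_integral_Ioi_stretch[OF absolutely_integrable_Gamma_integral'[OF z] \<sigma>]
    by (simp add: scaleR_conv_of_real divide_inverse_commute)
  then have "((\<lambda>t. of_real \<sigma> powr (1 - z) * ?f (\<sigma> * t)) has_integral
               of_real \<sigma> powr (1 - z) * (Gamma z / of_real \<sigma>)) {0<..}"
    by (rule has_integral_mult_right)
  also have "of_real \<sigma> powr (1 - z) * (Gamma z / of_real \<sigma>) = Gamma z / of_real \<sigma> powr z"
    using \<sigma> by (simp add: powr_diff field_simps)
  finally show ?thesis
  proof (rule has_integral_eq[rotated])
    fix t :: real assume "t \<in> {0<..}"
    show "of_real \<sigma> powr (1 - z) * ?f (\<sigma> * t) = of_real t powr (z - 1) * exp (- of_real \<sigma> * of_real t)"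
    proof -
      have "of_real (\<sigma> * t) powr (z - 1) = of_real \<sigma> powr (z - 1) * (of_real t powr (z - 1) :: complex)"
        using \<open>t \<in> {0<..}\<close> \<sigma> by (simp add: powr_times_real)
      moreover have "of_real \<sigma> powr (1 - z) * of_real \<sigma> powr (z - 1) = (1 :: complex)"
        using \<sigma> by (simp flip: powr_add)
      ultimately show ?thesis
        by (simp add: exp_minus field_simps flip: exp_of_real)
    qed
  qed
qed

lemma exp_partial_sum_le:
  fixes x :: real
  assumes "x \<ge> 0"
  shows "(\<Sum>j<N. x ^ j / fact j) \<le> exp x"
proof -
  have "(\<lambda>j. x ^ j / fact j) sums exp x"
    using exp_converges[of x] by (simp add: divide_inverse_commute)
  then have "(\<Sum>j<N. x ^ j / fact j) \<le> (\<Sum>j. x ^ j / fact j)"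
    using assms by (intro sum_le_suminf) (auto simp: sums_iff)
  with \<open>(\<lambda>j. x ^ j / fact j) sums exp x\<close> show ?thesis
    by (simp add: sums_iff)
qed

lemma powr_add_of_nat:
  fixes x z :: complex
  assumes "x \<noteq> 0"
  shows "x powr (z + of_nat n) = x powr z * x ^ n"
  using assms by (simp add: powr_add powr_nat')

lemma Gamma_add_of_nat:
  fixes z :: complex
  assumes "Re z > 0"
  shows "Gamma (z + of_nat n) = pochhammer z n * Gamma z"
proof -
  have "z \<notin> \<int>\<^sub>\<le>\<^sub>0"
    using assms nonpos_Ints_subset_nonpos_Reals by (auto simp: complex_nonpos_Reals_iff)
  then show ?thesis
    by (simp add: pochhammer_Gamma Gamma_eq_zero_iff)
qed

lemma Gamma_integral_scaled_times_exp_partial_sum: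
  fixes z \<delta> :: complex and \<sigma> :: real
  assumes z: "Re z > 0" and \<sigma>: "\<sigma> > 0"
  shows "((\<lambda>t. of_real t powr (z - 1) * exp (- of_real \<sigma> * of_real t) * (\<Sum>j<N. (\<delta> * of_real t) ^ j / fact j))
          has_integral (\<Sum>j<N. Gamma (z + of_nat j) / of_real \<sigma> powr (z + of_nat j) * (\<delta> ^ j / fact j))) {0<..}"
proof -
  have "((\<lambda>t. of_real t powr (z + of_nat j - 1) * exp (- of_real \<sigma> * of_real t) * (\<delta> ^ j / fact j))
      has_integral Gamma (z + of_nat j) / of_real \<sigma> powr (z + of_nat j) * (\<delta> ^ j / fact j)) {0<..}" for j
    using z by (intro has_integral_mult_left[OF Gamma_integral_real_scaled[OF _ \<sigma>]]) simp
  then have "((\<lambda>t. \<Sum>j<N. of_real t powr (z + of_nat j - 1) * exp (- of_real \<sigma> * of_real t) * (\<delta> ^ j / fact j))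
      has_integral (\<Sum>j<N. Gamma (z + of_nat j) / of_real \<sigma> powr (z + of_nat j) * (\<delta> ^ j / fact j))) {0<..}"
    by (intro has_integral_sum) auto
  then show ?thesis
  proof (rule has_integral_eq[rotated])
    fix t :: real assume "t \<in> {0<..}"
    then have "of_real t powr (z + of_nat j - 1) = of_real t powr (z - 1) * (of_real t ^ j :: complex)" for j
      using powr_add_of_nat[of "of_real t" "z - 1" j] by (simp add: algebra_simps)
    then show "(\<Sum>j<N. of_real t powr (z + of_nat j - 1) * exp (- of_real \<sigma> * of_real t) * (\<delta> ^ j / fact j))
        = of_real t powr (z - 1) * exp (- of_real \<sigma> * of_real t) * (\<Sum>j<N. (\<delta> * of_real t) ^ j / fact j)"
      by (simp add: sum_distrib_left power_mult_distrib ac_simps)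
  qed
qed

lemma Gamma_binomial_series:
  fixes z \<delta> :: complex and \<sigma> :: real
  assumes z: "Re z > 0" and \<sigma>: "\<sigma> > 0" and \<delta>: "cmod \<delta> < \<sigma>"
  shows "(\<lambda>j. Gamma (z + of_nat j) / of_real \<sigma> powr (z + of_nat j) * (\<delta> ^ j / fact j))
           sums (Gamma z / (of_real \<sigma> - \<delta>) powr z)"
proof -
  define u where "u = - \<delta> / of_real \<sigma>"
  have \<sigma>0: "(of_real \<sigma> :: complex) \<noteq> 0"
    using \<sigma> by simp
  have "norm u < 1"
    using \<delta> \<sigma> by (simp add: u_def norm_divide)
  then have "(\<lambda>j. Gamma z * of_real \<sigma> powr (- z) * ((- z gchoose j) * u ^ j))
      sums (Gamma z * of_real \<sigma> powr (- z) * (1 + u) powr (- z))"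
    by (rule sums_mult[OF gen_binomial_complex])
  moreover have "of_real \<sigma> powr (- z) * (1 + u) powr (- z) = (of_real \<sigma> - \<delta>) powr (- z)"
  proof -
    have "of_real \<sigma> - \<delta> = of_real \<sigma> * (1 + u)"
      using \<sigma>0 by (simp add: u_def field_simps)
    then show ?thesis
      using \<sigma> by (simp add: powr_times_real_left)
  qed
  moreover have "Gamma z * of_real \<sigma> powr (- z) * ((- z gchoose j) * u ^ j)
      = Gamma (z + of_nat j) / of_real \<sigma> powr (z + of_nat j) * (\<delta> ^ j / fact j)" for j
  proof -
    have "u ^ j = (- 1) ^ j * (\<delta> ^ j / of_real \<sigma> ^ j)"
      unfolding u_def power_divide power_minus[of \<delta>] by simp
    then have "(- z gchoose j) * u ^ j = pochhammer z j * \<delta> ^ j / (fact j * of_real \<sigma> ^ j)"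
      unfolding gbinomial_pochhammer by simp
    then show ?thesis
      using z \<sigma>0 by (simp add: Gamma_add_of_nat powr_add_of_nat powr_minus field_simps)
  qed
  ultimately show ?thesis
    by (simp add: mult.assoc powr_minus_divide)
qed

lemma Gamma_integral_scaled_disc:
  fixes z \<mu> :: complex and \<sigma> :: real
  assumes z: "Re z > 0" and \<sigma>: "\<sigma> > 0" and \<mu>: "cmod (of_real \<sigma> - \<mu>) < \<sigma>"
  shows "((\<lambda>t. of_real t powr (z - 1) * exp (- \<mu> * of_real t)) has_integral Gamma z / \<mu> powr z) {0<..}"
proof -
  define \<delta> where "\<delta> = of_real \<sigma> - \<mu>"
  define F where "F = (\<lambda>N t. of_real t powr (z - 1) * exp (- of_real \<sigma> * of_real t)
                              * (\<Sum>j<N. (\<delta> * of_real t) ^ j / fact j))"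
  define h where "h = (\<lambda>t::real. t powr (Re z - 1) / exp ((\<sigma> - cmod \<delta>) * t))"
  have h_integrable: "h integrable_on {0<..}"
  proof -
    have "(\<lambda>t. complex_of_real t powr (z - 1) / of_real (exp ((\<sigma> - cmod \<delta>) * t))) absolutely_integrable_on {0<..}"
      using \<mu> by (intro absolutely_integrable_Gamma_integral[OF z]) (simp add: \<delta>_def)
    then have "(\<lambda>t. norm (complex_of_real t powr (z - 1) / of_real (exp ((\<sigma> - cmod \<delta>) * t))))
        integrable_on {0<..}"
      by (simp add: absolutely_integrable_on_def)
    then show ?thesis
      by (rule integrable_eq) (auto simp: h_def norm_divide norm_powr_real_powr)
  qed
  have F_bound: "norm (F N t) \<le> h t" if "t \<in> {0<..}" for N t
  proof -
    have "norm (F N t) \<le> t powr (Re z - 1) * exp (- \<sigma> * t) * (\<Sum>j<N. norm ((\<delta> * of_real t) ^ j / fact j))"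
      using that unfolding F_def
      by (simp add: norm_mult norm_powr_real_powr norm_exp_eq_Re mult_left_mono norm_sum)
    also have "(\<Sum>j<N. norm ((\<delta> * of_real t) ^ j / fact j)) = (\<Sum>j<N. (cmod \<delta> * t) ^ j / fact j)"
      using that by (simp add: norm_divide norm_mult norm_power)
    also have "\<dots> \<le> exp (cmod \<delta> * t)"
      using that by (intro exp_partial_sum_le) simp
    finally show ?thesis
      using that by (simp add: h_def mult_left_mono exp_minus exp_diff field_simps)
  qed
  have F_limit: "(\<lambda>N. F N t) \<longlonglongrightarrow> of_real t powr (z - 1) * exp (- \<mu> * of_real t)" for t
  proof -
    have "(\<lambda>j. (\<delta> * of_real t) ^ j / fact j) sums exp (\<delta> * of_real t)"
      using exp_converges[of "\<delta> * of_real t"] by (simp add: scaleR_conv_of_real divide_inverse_commute)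
    then have "(\<lambda>N. F N t) \<longlonglongrightarrow> of_real t powr (z - 1) * exp (- of_real \<sigma> * of_real t) * exp (\<delta> * of_real t)"
      unfolding F_def sums_def by (rule tendsto_mult_left)
    moreover have "exp (- of_real \<sigma> * of_real t) * exp (\<delta> * of_real t) = exp (- \<mu> * of_real t)"
      unfolding \<delta>_def by (simp flip: exp_add add: algebra_simps)
    ultimately show ?thesis
      by (simp add: mult.assoc)
  qed
  define Y where "Y = (\<lambda>N. \<Sum>j<N. Gamma (z + of_nat j) / of_real \<sigma> powr (z + of_nat j) * (\<delta> ^ j / fact j))"
  have Y_limit: "Y \<longlonglongrightarrow> Gamma z / \<mu> powr z"
    using Gamma_binomial_series[OF z \<sigma>, of \<delta>] \<mu> unfolding Y_def sums_def \<delta>_def by simp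
  have F_integral: "(F N has_integral Y N) {0<..}" for N
    unfolding F_def Y_def by (rule Gamma_integral_scaled_times_exp_partial_sum[OF z \<sigma>])
  show ?thesis
    using F_bound F_limit
    by (intro has_integral_dominated_convergence[OF F_integral h_integrable _ _ Y_limit] ballI)
qed

lemma Gamma_integral_complex_scaled:
  fixes z \<mu> :: complex
  assumes z: "Re z > 0" and \<mu>: "Re \<mu> > 0"
  shows "((\<lambda>t. of_real t powr (z - 1) * exp (- \<mu> * of_real t)) has_integral Gamma z / \<mu> powr z) {0<..}"
proof (rule Gamma_integral_scaled_disc[OF z])
  define \<sigma> where "\<sigma> = (cmod \<mu>)\<^sup>2 / Re \<mu>"
  have "\<mu> \<noteq> 0"
    using \<mu> by auto
  then show "\<sigma> > 0"
    using \<mu> by (simp add: \<sigma>_def)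
  have "\<sigma> * Re \<mu> = (cmod \<mu>)\<^sup>2"
    using \<mu> by (simp add: \<sigma>_def)
  then have "(cmod (of_real \<sigma> - \<mu>))\<^sup>2 = \<sigma>\<^sup>2 - (cmod \<mu>)\<^sup>2"
    by (simp add: cmod_power2 power2_diff algebra_simps)
  also have "\<dots> < \<sigma>\<^sup>2"
    using \<open>\<mu> \<noteq> 0\<close> by simp
  finally show "cmod (of_real \<sigma> - \<mu>) < \<sigma>"
    using \<open>\<sigma> > 0\<close> by (meson power_less_imp_less_base less_imp_le)
qed

lemma Gamma_integral_complex_scaled_times_polynomial:
  fixes s \<mu> :: complex and c :: "nat \<Rightarrow> complex"
  assumes s: "Re s > 0" and \<mu>: "Re \<mu> > 0"
  shows "((\<lambda>t. of_real t powr (s - 1) * exp (- \<mu> * of_real t) * (\<Sum>n\<le>N. c n * (\<mu> * of_real t) ^ n))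
          has_integral Gamma s / \<mu> powr s * (\<Sum>n\<le>N. c n * pochhammer s n)) {0<..}"
proof -
  have \<mu>0: "\<mu> \<noteq> 0"
    using \<mu> by auto
  have "c n * \<mu> ^ n * (Gamma (s + of_nat n) / \<mu> powr (s + of_nat n)) = Gamma s / \<mu> powr s * (c n * pochhammer s n)" for n
    using s \<mu>0 by (simp add: Gamma_add_of_nat powr_add_of_nat field_simps)
  moreover have "((\<lambda>t. c n * \<mu> ^ n * (of_real t powr (s + of_nat n - 1) * exp (- \<mu> * of_real t)))
      has_integral c n * \<mu> ^ n * (Gamma (s + of_nat n) / \<mu> powr (s + of_nat n))) {0<..}" for n
    using s by (intro has_integral_mult_right[OF Gamma_integral_complex_scaled[OF _ \<mu>]]) simp
  ultimately have "((\<lambda>t. \<Sum>n\<le>N. c n * \<mu> ^ n * (of_real t powr (s + of_nat n - 1) * exp (- \<mu> * of_real t)))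
      has_integral Gamma s / \<mu> powr s * (\<Sum>n\<le>N. c n * pochhammer s n)) {0<..}"
    by (simp add: sum_distrib_left has_integral_sum)
  then show ?thesis
  proof (rule has_integral_eq[rotated])
    fix t :: real assume "t \<in> {0<..}"
    then have "of_real t powr (s + of_nat n - 1) = of_real t powr (s - 1) * (of_real t ^ n :: complex)" for n
      using powr_add_of_nat[of "of_real t" "s - 1" n] by (simp add: algebra_simps)
    then show "(\<Sum>n\<le>N. c n * \<mu> ^ n * (of_real t powr (s + of_nat n - 1) * exp (- \<mu> * of_real t)))
        = of_real t powr (s - 1) * exp (- \<mu> * of_real t) * (\<Sum>n\<le>N. c n * (\<mu> * of_real t) ^ n)"
      by (simp add: sum_distrib_left power_mult_distrib ac_simps)
  qed
qed

lemma pfaff_saalschuetz_reflected: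
  fixes \<beta> \<gamma> :: complex
  assumes "\<beta> - \<gamma> - of_nat m - of_nat k \<notin> \<int>\<^sub>\<le>\<^sub>0"
  shows "(\<Sum>n\<le>m. saalschuetz_term (\<beta> - of_nat k - 1) (- of_nat m - of_nat k - \<gamma>) (- of_nat m - of_nat k) m n)
    = pochhammer \<beta> m * pochhammer \<gamma> m / (pochhammer (1 + of_nat k) m * pochhammer (1 + of_nat k + \<gamma> - \<beta>) m)"
proof -
  define a where "a = \<beta> - of_nat k - 1"
  define b where "b = - of_nat m - of_nat k - \<gamma>"
  define c where "c = 1 - of_nat m - (1 + of_nat k :: complex)"
  have c_a: "c - a = 1 - of_nat m - \<beta>" and c_b: "c - b = \<gamma>" and c_a_b: "c - a - b = 1 + of_nat k + \<gamma> - \<beta>"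
    by (simp_all add: a_def b_def c_def)
  have "pochhammer (of_nat (Suc k) :: complex) m \<noteq> 0"
    unfolding pochhammer_of_nat using pochhammer_pos[of "Suc k" m] by (simp only: of_nat_eq_0_iff) simp
  then have "pochhammer c m \<noteq> 0"
    unfolding c_def pochhammer_reflect by simp
  moreover have "pochhammer (c - a - b) m \<noteq> 0"
  proof
    assume "pochhammer (c - a - b) m = 0"
    then obtain j where "j < m" "c - a - b = - of_nat j"
      by (auto simp: pochhammer_eq_0_iff)
    then have "\<beta> - \<gamma> - of_nat m - of_nat k = - of_nat (m - 1 - j)"
      unfolding c_a_b by (simp add: of_nat_diff algebra_simps)
    with assms show False
      by simp
  qed
  ultimately have "(\<Sum>n\<le>m. saalschuetz_term a b c m n)
      = pochhammer (c - a) m * pochhammer (c - b) m / (pochhammer c m * pochhammer (c - a - b) m)"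
    by (rule pfaff_saalschuetz)
  also have "\<dots> = pochhammer \<beta> m * pochhammer \<gamma> m / (pochhammer (1 + of_nat k) m * pochhammer (1 + of_nat k + \<gamma> - \<beta>) m)"
    unfolding c_a_b unfolding c_a c_b unfolding c_def pochhammer_reflect by simp
  finally show ?thesis
    by (simp add: a_def b_def c_def)
qed

section \<open>The Mellin transform of the truncated \<open>\<^sub>2F\<^sub>2\<close>\<close>

lemma hyp2F2_trunc_eq_polynomial:
  "hyp2F2_trunc a1 a2 b1 b2 z N =
     (\<Sum>n\<le>N. pochhammer a1 n * pochhammer a2 n / (pochhammer b1 n * pochhammer b2 n * fact n) * z ^ n)"
  unfolding hyp2F2_trunc_def by (simp add: field_simps)

theorem mainTheorem20:
  fixes m k :: nat and \<beta> \<gamma> \<mu> :: complex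
  assumes "m \<ge> 1" and "k \<ge> 1"
    and "\<beta> - of_nat k - 1 \<notin> \<int>\<^sub>\<le>\<^sub>0"
    and "\<beta> - \<gamma> - of_nat m - of_nat k \<notin> \<int>\<^sub>\<le>\<^sub>0"
    and "Re (- of_nat m - of_nat k - \<gamma>) > 0"
    and "Re \<mu> > 0"
  shows "((\<lambda>t::real. of_real t powr (- of_nat m - of_nat k - \<gamma> - 1) * exp (- \<mu> * of_real t)
            * hyp2F2_trunc (- of_nat m) (\<beta> - of_nat k - 1) (- of_nat m - of_nat k)
                (\<beta> - \<gamma> - of_nat m - of_nat k) (\<mu> * of_real t) m)
          has_integral
          (Gamma (- of_nat m - of_nat k - \<gamma>) / \<mu> powr (- of_nat m - of_nat k - \<gamma>)
            * (pochhammer \<beta> m * pochhammer \<gamma> m)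
              / (pochhammer (1 + of_nat k) m * pochhammer (1 + of_nat k + \<gamma> - \<beta>) m))) {0<..}"
proof -
  define s where "s = - of_nat m - of_nat k - \<gamma>"
  define coef where "coef n = pochhammer (- of_nat m) n * pochhammer (\<beta> - of_nat k - 1) n
      / (pochhammer (- of_nat m - of_nat k) n * pochhammer (\<beta> - \<gamma> - of_nat m - of_nat k) n * fact n)" for n
  have balanced: "1 + (\<beta> - of_nat k - 1) + s - (- of_nat m - of_nat k) - of_nat m = \<beta> - \<gamma> - of_nat m - of_nat k"
    by (simp add: s_def)
  have "hyp2F2_trunc (- of_nat m) (\<beta> - of_nat k - 1) (- of_nat m - of_nat k) (\<beta> - \<gamma> - of_nat m - of_nat k) z m
      = (\<Sum>n\<le>m. coef n * z ^ n)" for z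
    unfolding hyp2F2_trunc_eq_polynomial coef_def ..
  moreover have "(\<Sum>n\<le>m. coef n * pochhammer s n)
      = pochhammer \<beta> m * pochhammer \<gamma> m / (pochhammer (1 + of_nat k) m * pochhammer (1 + of_nat k + \<gamma> - \<beta>) m)"
    unfolding pfaff_saalschuetz_reflected[OF assms(4), folded s_def, symmetric] saalschuetz_term_def
      balanced coef_def by (simp add: ac_simps)
  ultimately show ?thesis
    using Gamma_integral_complex_scaled_times_polynomial[OF assms(5)[folded s_def] assms(6), of coef m]
    unfolding s_def[symmetric] by (simp add: mult.assoc)
qed

end
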